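(* Let $\eta_\varepsilon$ be as in the context. Fix $B>0$, $a\in(-1,1)$, $b\in(-1,1)$ and arbitrary real numbers $\dot a,\dot b,\dot B$ (treated as independent real parameters). Put $z=\varepsilon^{-1}B(x-a)$ and define $$ L_\varepsilon=\frac{\varepsilon\dot b}{\sqrt{1-b^2}}\int_{\mathbb R}\eta_\varepsilon^2(x)\tanh(z)\,dx+b\sqrt{1-b^2}\,B\dot a\int_{\mathbb R}\eta_\varepsilon^2(x)\,\mathrm{sech}^2(z)\,dx-\varepsilon b\sqrt{1-b^2}\,\dot B B^{-1}\int_{\mathbb R}\eta_\varepsilon^2(x)\,z\,\mathrm{sech}^2(z)\,dx $$ $$ \qquad+(1-b^2)B^2\int_{\mathbb R}\eta_\varepsilon^2(x)\,\mathrm{sech}^4(z)\,dx+\frac12(1-b^2)^2\int_{\mathbb R}\eta_\varepsilon^4(x)\,\mathrm{sech}^4(z)\,dx . $$ Then $$ \lim_{\varepsilon\to0}\frac{L_\varepsilon}{2\varepsilon}=-\frac{\dot b}{\sqrt{1-b^2}}\Big(a-\frac13a^3\Big)+b\sqrt{1-b^2}\,(1-a^2)\,\dot a+\frac23(1-a^2)(1-b^2)B+\frac{1}{3B}(1-a^2)^2(1-b^2)^2 . $$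
   Context: For all sufficiently small $\varepsilon>0$, $\eta_\varepsilon:\mathbb R\to(0,\infty)$ is a smooth solution of $\varepsilon^2\eta_\varepsilon''+(1-x^2-\eta_\varepsilon^2)\eta_\varepsilon=0$ on $\mathbb R$ that decays to zero as $|x|\to\infty$ faster than any exponential, and it has the following properties: $\eta_\varepsilon(x)\to\eta_0(x)$ pointwise as $\varepsilon\to0$, where $\eta_0(x)=(1-x^2)^{1/2}$ for $|x|<1$ and $\eta_0(x)=0$ for $|x|>1$; for every compact $K\subset(-1,1)$ there is $C_K>0$ with $\|\eta_\varepsilon-\eta_0\|_{C^1(K)}\le C_K\varepsilon^2$; and there is $C>0$ with $\|\eta_\varepsilon-\eta_0\|_{L^\infty}\le C\varepsilon^{1/3}$, $\|\eta_\varepsilon'\|_{L^\infty}\le C\varepsilon^{-1/3}$, $\|\eta_\varepsilon''\|_{L^\infty}\le C\varepsilon^{-1}$. ($L_\varepsilon$ is the Lagrangian $L(v)=\frac{i}{2}\varepsilon\int\eta_\varepsilon^2(v\bar v_t-\bar v v_t)dx+\varepsilon^2\int\eta_\varepsilon^2|v_x|^2dx+\frac12\int\eta_\varepsilon^4(1-|v|^2)^2dx$ evaluated on the dark-soliton ansatz $v=\sqrt{1-b^2}\tanh(\varepsilon^{-1}B(x-a))+ib$.) *)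

theory Defs
  imports "HOL-Analysis.Analysis"
begin

definition eta0 :: "real \<Rightarrow> real" where
  "eta0 x = (if \<bar>x\<bar> < 1 then sqrt (1 - x^2) else 0)"

definition sech :: "real \<Rightarrow> real" where
  "sech z = 1 / cosh z"

definition smooth_real :: "(real \<Rightarrow> real) \<Rightarrow> bool" where
  "smooth_real f \<longleftrightarrow> (\<forall>n x. ((deriv ^^ n) f) differentiable (at x))"

definition eta_profile :: "real \<Rightarrow> (real \<Rightarrow> real) \<Rightarrow> bool" where
  "eta_profile \<epsilon> f \<longleftrightarrow>
     smooth_real f \<and> (\<forall>x. f x > 0) \<and>
     (\<forall>x. \<epsilon>^2 * deriv (deriv f) x + (1 - x^2 - (f x)^2) * f x = 0) \<and>
     (\<forall>c::real. ((\<lambda>x. f x * exp (c * \<bar>x\<bar>)) \<longlongrightarrow> 0) at_infinity)"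

text \<open>The reduced Lagrangian L_eps (with independent parameters ad, bd, Bd for the time derivatives).\<close>
definition Lagr :: "(real \<Rightarrow> real \<Rightarrow> real) \<Rightarrow> real \<Rightarrow> real \<Rightarrow> real \<Rightarrow> real \<Rightarrow> real \<Rightarrow> real \<Rightarrow> real \<Rightarrow> real" where
  "Lagr \<eta> \<epsilon> a b B ad bd Bd =
     (let z = (\<lambda>x. B * (x - a) / \<epsilon>) in
       \<epsilon> * bd / sqrt (1 - b^2) * (LBINT x. (\<eta> \<epsilon> x)^2 * tanh (z x))
     + b * sqrt (1 - b^2) * B * ad * (LBINT x. (\<eta> \<epsilon> x)^2 * (sech (z x))^2)
     - \<epsilon> * b * sqrt (1 - b^2) * Bd / B * (LBINT x. (\<eta> \<epsilon> x)^2 * z x * (sech (z x))^2)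
     + (1 - b^2) * B^2 * (LBINT x. (\<eta> \<epsilon> x)^2 * (sech (z x))^4)
     + 1/2 * (1 - b^2)^2 * (LBINT x. (\<eta> \<epsilon> x)^4 * (sech (z x))^4))"

end

theory Submission imports Defs "HOL-Probability.Sinc_Integral" begin

(* Write z = B (x - a) / eps.  Every integral in the reduced Lagrangian has the
   form  I_p[h](eps) = \<integral> eta_eps(x)^p h(z) dx  (a "moment" of eta_eps against a profile h).
   Two limit regimes occur:
   - h bounded with a pointwise limit (tanh z \<rightarrow> sgn (x - a), z sech\<^sup>2 z \<rightarrow> 0): by dominated
     convergence I_2[h] tends to \<integral> eta_0\<^sup>2 \<cdot> lim h, which for tanh is -2 (a - a\<^sup>3/3);
   - h integrable (sech\<^sup>2, sech\<^sup>4): substituting x = a + eps y/B shows that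
     I_p[h](eps)/eps \<rightarrow> eta_0(a)^p (\<integral> h) / B, the soliton concentrating at x = a.
   Dominated convergence needs a uniform integrable envelope: from the uniform closeness to
   eta_0 near the origin and the ODE away from it we get  0 < eta_eps(x) \<le> K/(1 + x\<^sup>2). *)


section \<open>Dominated convergence along eps \<rightarrow> 0+\<close>

text \<open>The library states dominated convergence for a parameter tending to infinity;
  we transport it to a parameter tending to zero from the right.\<close>
lemma integral_dominated_convergence_at_right_0:
  fixes s :: "real \<Rightarrow> real \<Rightarrow> real" and w f :: "real \<Rightarrow> real"
  assumes f: "f \<in> borel_measurable lborel" and w: "integrable lborel w"
    and dom: "eventually (\<lambda>e. s e \<in> borel_measurable lborel \<and> (\<forall>x. \<bar>s e x\<bar> \<le> w x)) (at_right 0)"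
    and lim: "AE x in lborel. ((\<lambda>e. s e x) \<longlongrightarrow> f x) (at_right 0)"
  shows "((\<lambda>e. integral\<^sup>L lborel (s e)) \<longlongrightarrow> integral\<^sup>L lborel f) (at_right 0)"
proof -
  define P where "P e \<longleftrightarrow> s e \<in> borel_measurable lborel \<and> (\<forall>x. \<bar>s e x\<bar> \<le> w x)" for e
  define s' where "s' t = (if P (inverse t) then s (inverse t) else (\<lambda>_. 0))" for t
  have evt: "eventually (\<lambda>t. P (inverse t)) at_top"
    using dom unfolding eventually_at_right_to_top P_def by simp
  have same: "eventually (\<lambda>t. s' t = s (inverse t)) at_top"
    using evt by eventually_elim (simp add: s'_def)
  have lim': "AE x in lborel. ((\<lambda>t. s' t x) \<longlongrightarrow> f x) at_top"
    using lim
  proof eventually_elim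
    case (elim x)
    then have "((\<lambda>t. s (inverse t) x) \<longlongrightarrow> f x) at_top"
      using filterlim_at_right_to_top[THEN iffD1] by blast
    moreover have "eventually (\<lambda>t. s (inverse t) x = s' t x) at_top"
      using same by eventually_elim simp
    ultimately show ?case using tendsto_cong by fastforce
  qed
  have "((\<lambda>t. integral\<^sup>L lborel (s' t)) \<longlongrightarrow> integral\<^sup>L lborel f) at_top"
  proof (rule integral_dominated_convergence_at_top[OF f _ w lim'])
    show "s' t \<in> borel_measurable lborel" for t unfolding s'_def P_def by auto
    show "\<forall>\<^sub>F t in at_top. AE x in lborel. norm (s' t x) \<le> w x"
      using evt by eventually_elim (auto simp: s'_def P_def)
  qed
  moreover have "eventually (\<lambda>t. integral\<^sup>L lborel (s' t) = integral\<^sup>L lborel (s (inverse t))) at_top"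
    using same by eventually_elim simp
  ultimately have "((\<lambda>t. integral\<^sup>L lborel (s (inverse t))) \<longlongrightarrow> integral\<^sup>L lborel f) at_top"
    by (rule Lim_transform_eventually)
  then show ?thesis unfolding filterlim_at_right_to_top by simp
qed


text \<open>sech^2 = 1 - tanh^2 is the derivative of tanh; used to integrate powers of sech.\<close>
lemma sech_sq_eq: "(sech (y::real))^2 = 1 - (tanh y)^2"
proof -
  have "cosh y ^ 2 = 1 + sinh y ^ 2" using hyperbolic_pythagoras[of y] by simp
  moreover have "1 + sinh y ^ 2 > 0" by (simp add: add_pos_nonneg)
  ultimately show ?thesis unfolding sech_def tanh_def by (simp add: field_simps)
qed

lemma continuous_at_within_sech [continuous_intros]:
  fixes f :: "'a::t2_space \<Rightarrow> real"
  shows "continuous (at x within A) f \<Longrightarrow> continuous (at x within A) (\<lambda>x. sech (f x))"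
  unfolding sech_def by (intro continuous_intros) auto

lemma continuous_on_sech [continuous_intros]:
  fixes f :: "'a::topological_space \<Rightarrow> real"
  shows "continuous_on S f \<Longrightarrow> continuous_on S (\<lambda>x. sech (f x))"
  unfolding sech_def by (intro continuous_intros) auto

text \<open>Algebraic decay of sech^2, from cosh y \<ge> (1 + |y|)/2.\<close>
lemma sech_sq_le: "(sech (y::real))^2 \<le> 4 / (1 + y^2)"
proof -
  have "exp \<bar>y\<bar> / 2 \<le> cosh y" by (cases "y \<ge> 0") (auto simp: cosh_def)
  moreover have "1 + \<bar>y\<bar> \<le> exp \<bar>y\<bar>" by (rule exp_ge_add_one_self)
  ultimately have c: "(1 + \<bar>y\<bar>) / 2 \<le> cosh y" by (smt (verit) divide_right_mono)
  have "(1 + y^2) / 4 \<le> ((1 + \<bar>y\<bar>) / 2)^2" by (simp add: power2_eq_square field_simps)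
  also have "\<dots> \<le> (cosh y)^2" using c by (intro power_mono) auto
  finally have "(1 + y^2) / 4 \<le> (cosh y)^2" .
  moreover have "0 < (1 + y^2) / 4" by (simp add: add_pos_nonneg)
  ultimately have "1 / (cosh y)^2 \<le> 1 / ((1 + y^2) / 4)" by (intro divide_left_mono) auto
  then show ?thesis by (simp add: sech_def power_divide)
qed

lemma abs_z_sech_sq_le:
  fixes z :: real
  shows "\<bar>z * (sech z)^2\<bar> \<le> 2" and "z \<noteq> 0 \<Longrightarrow> \<bar>z * (sech z)^2\<bar> \<le> 4 / \<bar>z\<bar>"
proof -
  have p: "0 < 1 + z^2" by (simp add: add_pos_nonneg)
  have "\<bar>z * (sech z)^2\<bar> = \<bar>z\<bar> * (sech z)^2" by (simp add: abs_mult)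
  also have "\<dots> \<le> \<bar>z\<bar> * (4 / (1 + z^2))" by (intro mult_left_mono sech_sq_le) auto
  finally have b: "\<bar>z * (sech z)^2\<bar> \<le> 4 * \<bar>z\<bar> / (1 + z^2)" by (simp add: mult.commute)
  have "0 \<le> (\<bar>z\<bar> - 1)^2" by simp
  then have "4 * \<bar>z\<bar> \<le> 2 * (1 + z^2)" by (simp add: power2_eq_square algebra_simps)
  then have "4 * \<bar>z\<bar> / (1 + z^2) \<le> 2" using p by (simp add: pos_divide_le_eq)
  with b show "\<bar>z * (sech z)^2\<bar> \<le> 2" by linarith
  assume z: "z \<noteq> 0"
  have "4 * \<bar>z\<bar> / (1 + z^2) \<le> 4 * \<bar>z\<bar> / z^2" by (rule frac_le) (use z in auto)
  also have "\<dots> = 4 / \<bar>z\<bar>" using z by (simp add: power2_eq_square field_simps abs_mult_self_eq)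
  finally show "\<bar>z * (sech z)^2\<bar> \<le> 4 / \<bar>z\<bar>" using b by linarith
qed

lemma tendsto_const_div_at_right_0:
  fixes d :: real assumes "d > 0"
  shows "filterlim (\<lambda>e. d / e) at_top (at_right 0)"
proof -
  have "filterlim (\<lambda>t::real. d * t) at_top at_top"
    by (rule filterlim_tendsto_pos_mult_at_top[OF tendsto_const assms filterlim_ident])
  then show ?thesis unfolding filterlim_at_right_to_top by (simp add: divide_inverse)
qed

lemma tanh_div_tendsto_sgn:
  fixes c :: real assumes "c \<noteq> 0"
  shows "((\<lambda>e. tanh (c / e)) \<longlongrightarrow> sgn c) (at_right 0)"
proof (cases "c > 0")
  case True
  then show ?thesis
    using filterlim_compose[OF tanh_real_at_top tendsto_const_div_at_right_0] by simp
next
  case False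
  then have "-c > 0" using assms by simp
  from tendsto_minus[OF filterlim_compose[OF tanh_real_at_top tendsto_const_div_at_right_0[OF this]]]
  show ?thesis using False assms by simp
qed

lemma z_sech_sq_div_tendsto_0:
  fixes c :: real assumes c: "c \<noteq> 0"
  shows "((\<lambda>e. (c / e) * (sech (c / e))^2) \<longlongrightarrow> 0) (at_right 0)"
proof (rule Lim_null_comparison)
  show "((\<lambda>e. 4 / \<bar>c\<bar> * e) \<longlongrightarrow> 0) (at_right 0)"
    by (rule tendsto_mult_right_zero[OF tendsto_ident_at])
  show "\<forall>\<^sub>F e in at_right 0. norm ((c / e) * (sech (c / e))^2) \<le> 4 / \<bar>c\<bar> * e"
    using eventually_at_right_less[of "0::real"]
  proof eventually_elim
    case (elim e)
    then have "\<bar>(c / e) * (sech (c / e))^2\<bar> \<le> 4 / \<bar>c / e\<bar>"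
      using c by (intro abs_z_sech_sq_le(2)) simp
    then show ?case using elim by simp
  qed
qed


lemma integrable_inverse_1_plus_sq: "integrable lborel (\<lambda>y::real. 1 / (1 + y^2))"
proof -
  have "einterval (-\<infinity>) \<infinity> = (UNIV :: real set)" by (auto simp: einterval_iff)
  then show ?thesis
    using integrable_inverse_1_plus_square by (simp add: set_integrable_def divide_inverse)
qed

lemma integral_lborel_FTC_nonneg:
  fixes f F :: "real \<Rightarrow> real"
  assumes F: "\<And>x. DERIV F x :> f x" and f: "\<And>x. isCont f x" and nn: "\<And>x. 0 \<le> f x"
    and A: "(F \<longlongrightarrow> A) at_bot" and B: "(F \<longlongrightarrow> B) at_top"
  shows "integrable lborel f" "integral\<^sup>L lborel f = B - A"
proof -
  have U: "einterval (-\<infinity>) \<infinity> = (UNIV :: real set)" by (auto simp: einterval_iff)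
  have A': "((F \<circ> real_of_ereal) \<longlongrightarrow> A) (at_right (-\<infinity>))" using A by (simp add: ereal_tendsto_simps)
  have B': "((F \<circ> real_of_ereal) \<longlongrightarrow> B) (at_left \<infinity>)" using B by (simp add: ereal_tendsto_simps)
  have r: "set_integrable lborel (einterval (-\<infinity>) \<infinity>) f" "(LBINT x=-\<infinity>..\<infinity>. f x) = B - A"
    using interval_integral_FTC_nonneg[of "-\<infinity>" \<infinity> F f A B] F f nn A' B' by auto
  show "integrable lborel f" using r(1) U by (simp add: set_integrable_def)
  show "integral\<^sup>L lborel f = B - A" using r(2) U
    by (simp add: interval_lebesgue_integral_def set_lebesgue_integral_def)
qed

text \<open>The soliton integrals: \<integral> sech^2 = 2 (antiderivative tanh) and
  \<integral> sech^4 = 4/3 (antiderivative tanh - tanh^3/3).\<close>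
lemma sech_sq_integral:
  "integrable lborel (\<lambda>y. (sech y)^2)" "integral\<^sup>L lborel (\<lambda>y. (sech y)^2) = 2"
proof -
  have F: "DERIV tanh x :> (sech x)^2" for x :: real
  proof -
    have "DERIV tanh x :> 1 - (tanh x)^2" by (auto intro!: derivative_eq_intros)
    then show ?thesis by (simp add: sech_sq_eq)
  qed
  have c: "isCont (\<lambda>y. (sech y)^2) x" for x :: real
    by (intro continuous_intros)
  note FTC = integral_lborel_FTC_nonneg[OF F c _ tanh_real_at_bot tanh_real_at_top]
  show "integrable lborel (\<lambda>y. (sech y)^2)" by (rule FTC(1)) simp
  show "integral\<^sup>L lborel (\<lambda>y. (sech y)^2) = 2" using FTC(2) by simp
qed

lemma sech_pow4_integral:
  "integrable lborel (\<lambda>y. (sech y)^4)" "integral\<^sup>L lborel (\<lambda>y. (sech y)^4) = 4/3"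
proof -
  have F: "DERIV (\<lambda>x. tanh x - (tanh x)^3/3) x :> (sech x)^4" for x :: real
  proof -
    have "DERIV (\<lambda>x. tanh x - (tanh x)^3/3) x :> (1 - tanh x ^2) - 3 * tanh x ^ 2 * (1 - tanh x ^2) / 3"
      by (auto intro!: derivative_eq_intros)
    moreover have "(sech x)^4 = (1 - tanh x ^2)^2"
      using sech_sq_eq[of x] by (metis power_mult numeral_times_numeral semiring_norm(12,13))
    moreover have "(1 - tanh x ^2) - 3 * tanh x ^ 2 * (1 - tanh x ^2) / 3 = (1 - tanh x ^2)^2"
      by (simp add: power2_eq_square field_simps)
    ultimately show ?thesis by simp
  qed
  have c: "isCont (\<lambda>y. (sech y)^4) x" for x :: real
    by (intro continuous_intros)
  have A: "((\<lambda>x::real. tanh x - (tanh x)^3/3) \<longlongrightarrow> (-1) - (-1)^3/3) at_bot"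
    using tanh_real_at_bot by (intro tendsto_intros) auto
  have B: "((\<lambda>x::real. tanh x - (tanh x)^3/3) \<longlongrightarrow> 1 - 1^3/3) at_top"
    using tanh_real_at_top by (intro tendsto_intros) auto
  note FTC = integral_lborel_FTC_nonneg[OF F c _ A B]
  show "integrable lborel (\<lambda>y. (sech y)^4)" by (rule FTC(1)) simp
  show "integral\<^sup>L lborel (\<lambda>y. (sech y)^4) = 4/3" using FTC(2) by simp
qed


text \<open>eta_0 as a single formula, giving continuity and the values of its powers.\<close>
lemma eta0_alt: "eta0 x = sqrt (max 0 (1 - x^2))"
proof (cases "\<bar>x\<bar> < 1")
  case True
  then have "x^2 < 1" by (simp add: abs_square_less_1)
  then show ?thesis using True by (simp add: eta0_def max_def)
next
  case False
  then have "1 \<le> x^2" using one_le_power[of "\<bar>x\<bar>" 2] by simp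
  then show ?thesis using False by (simp add: eta0_def max_def)
qed

lemma eta0_sq: "(eta0 x)^2 = max 0 (1 - x^2)"
  by (simp add: eta0_alt)

lemma continuous_on_eta0: "continuous_on UNIV eta0"
  unfolding eta0_alt[abs_def] by (intro continuous_intros)

lemma abs_eta0_le_1: "\<bar>eta0 x\<bar> \<le> 1"
  by (simp add: eta0_alt max_def)

text \<open>The limit of the tanh-moment: \<integral> eta_0^2 sgn(x - a) = (\<integral>_a^1 - \<integral>_{-1}^a)(1 - x^2).\<close>
lemma eta0_sq_sgn_integral:
  fixes a :: real assumes a: "-1 < a" "a < 1"
  shows "integral\<^sup>L lborel (\<lambda>x. (eta0 x)^2 * sgn (x - a)) = - 2 * (a - a^3/3)"
proof -
  let ?f = "\<lambda>x::real. 1 - x^2"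
  have eq: "(eta0 x)^2 * sgn (x - a) = indicator {a..1} x *\<^sub>R ?f x - indicator {-1..a} x *\<^sub>R ?f x" for x
  proof -
    have "x^2 \<le> 1 \<longleftrightarrow> -1 \<le> x \<and> x \<le> 1" by (auto simp: abs_square_le_1)
    then show ?thesis using a by (auto simp: eta0_sq indicator_def sgn_if max_def)
  qed
  have c: "continuous_on {u..v} ?f" for u v by (intro continuous_intros)
  have i: "integrable lborel (\<lambda>x. indicator {u..v} x *\<^sub>R ?f x)" for u v
    using borel_integrable_atLeastAtMost'[OF c[of u v]] by (simp add: set_integrable_def)
  have D: "((\<lambda>x. x - x^3/3) has_vector_derivative ?f x) (at x within {u..v})" for x u v
  proof -
    have "((\<lambda>x::real. x - x^3/3) has_real_derivative ?f x) (at x)"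
      by (auto intro!: derivative_eq_intros simp: power2_eq_square)
    then show ?thesis
      by (simp add: has_real_derivative_iff_has_vector_derivative has_vector_derivative_at_within)
  qed
  have I1: "integral\<^sup>L lborel (\<lambda>x. indicator {a..1} x *\<^sub>R ?f x) = (1 - 1^3/3) - (a - a^3/3)"
    by (rule integral_FTC_atLeastAtMost[OF _ D c]) (use a in auto)
  have I2: "integral\<^sup>L lborel (\<lambda>x. indicator {-1..a} x *\<^sub>R ?f x) = (a - a^3/3) - ((-1) - (-1)^3/3)"
    by (rule integral_FTC_atLeastAtMost[OF _ D c]) (use a in auto)
  show ?thesis
    unfolding eq Bochner_Integration.integral_diff[OF i i] I1 I2 by simp
qed


section \<open>A uniform integrable envelope for eta_eps\<close>

text \<open>What the dominated convergence arguments need from eta_eps at a fixed eps: positivity,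
  continuity, the envelope K/(1 + x^2), and C eps^(1/3)-closeness to eta_0.\<close>
definition enveloped :: "(real \<Rightarrow> real \<Rightarrow> real) \<Rightarrow> real \<Rightarrow> real \<Rightarrow> real \<Rightarrow> bool" where
  "enveloped \<eta> K C e \<longleftrightarrow> 0 < e \<and> continuous_on UNIV (\<eta> e) \<and>
      (\<forall>x. 0 < \<eta> e x \<and> \<eta> e x \<le> K / (1 + x^2)) \<and> (\<forall>x. \<bar>\<eta> e x - eta0 x\<bar> \<le> C * e powr (1/3))"

text \<open>Near the origin (x^2 \<le> 4) the envelope follows from closeness to eta_0 \<le> 1.\<close>
lemma envelope_near:
  fixes e C v x :: real
  assumes e: "0 < e" "e < 1" and C: "C > 0"
    and close: "\<bar>v - eta0 x\<bar> \<le> C * e powr (1/3)" and x: "x^2 \<le> 4"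
  shows "v \<le> 5 * (1 + C) / (1 + x^2)"
proof -
  have "e powr (1/3) \<le> 1" using e by (intro powr_le1) auto
  then have "C * e powr (1/3) \<le> C" using C by (simp add: mult_left_le)
  then have v: "v \<le> 1 + C" using close abs_eta0_le_1[of x] by linarith
  have "(1 + C) * (1 + x^2) \<le> (1 + C) * 5" using x C by (intro mult_left_mono) auto
  then have "1 + C \<le> 5 * (1 + C) / (1 + x^2)" by (simp add: pos_le_divide_eq add_pos_nonneg)
  with v show ?thesis by linarith
qed

text \<open>Away from the origin the ODE gives (x^2 - 1) v \<le> eps^2 |v''| \<le> eps C \<le> C for v = eta_eps(x) > 0.\<close>
lemma envelope_far:
  fixes e C v d x :: real
  assumes e: "0 < e" "e < 1" and C: "C > 0" and v: "v > 0"
    and ode: "e^2 * d + (1 - x^2 - v^2) * v = 0" and dd: "\<bar>d\<bar> \<le> C / e" and x: "4 < x^2"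
  shows "v \<le> 5 * (1 + C) / (1 + x^2)"
proof -
  have "0 \<le> v^2 * v" using v by simp
  then have "(x^2 - 1) * v \<le> e^2 * d" using ode by (simp add: algebra_simps)
  also have "\<dots> \<le> e^2 * (C / e)" using dd by (intro mult_left_mono) auto
  also have "\<dots> = e * C" using e by (simp add: power2_eq_square)
  also have "\<dots> \<le> C" using e C by (simp add: mult_left_le_one_le)
  finally have "(x^2 - 1) * v \<le> C" .
  then have "v \<le> C / (x^2 - 1)" using x by (simp add: pos_le_divide_eq mult.commute)
  also have "\<dots> \<le> 5 * (1 + C) / (1 + x^2)"
  proof -
    have d: "0 < x^2 - 1" "0 < 1 + x^2" using x by auto
    have "C * (1 + x^2) \<le> C * (5 * (x^2 - 1))" using x C by (intro mult_left_mono) auto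
    also have "\<dots> \<le> (1 + C) * (5 * (x^2 - 1))" using d by (intro mult_right_mono) auto
    finally have "C * (1 + x^2) \<le> 5 * (1 + C) * (x^2 - 1)" by (simp only: mult_ac)
    with d show ?thesis by (simp add: divide_le_eq le_divide_eq mult.commute)
  qed
  finally show ?thesis .
qed

text \<open>Continuity is all we need from smoothness (for measurability of the integrands).\<close>
lemma smooth_real_continuous: "smooth_real f \<Longrightarrow> continuous_on UNIV f"
  unfolding smooth_real_def
  by (metis funpow_0 differentiable_imp_continuous_within continuous_at_imp_continuous_on)

lemma eventually_enveloped:
  fixes \<eta> :: "real \<Rightarrow> real \<Rightarrow> real"
  assumes profile: "eventually (\<lambda>\<epsilon>. eta_profile \<epsilon> (\<eta> \<epsilon>)) (at_right 0)"
    and global: "\<exists>C>0. eventually (\<lambda>\<epsilon>. \<forall>x.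
            \<bar>\<eta> \<epsilon> x - eta0 x\<bar> \<le> C * \<epsilon> powr (1/3) \<and>
            \<bar>deriv (\<eta> \<epsilon>) x\<bar> \<le> C * \<epsilon> powr (-1/3) \<and>
            \<bar>deriv (deriv (\<eta> \<epsilon>)) x\<bar> \<le> C / \<epsilon>) (at_right 0)"
  shows "\<exists>K C. eventually (enveloped \<eta> K C) (at_right 0)"
proof -
  from global obtain C where C: "C > 0" and G: "eventually (\<lambda>\<epsilon>. \<forall>x.
            \<bar>\<eta> \<epsilon> x - eta0 x\<bar> \<le> C * \<epsilon> powr (1/3) \<and>
            \<bar>deriv (\<eta> \<epsilon>) x\<bar> \<le> C * \<epsilon> powr (-1/3) \<and>
            \<bar>deriv (deriv (\<eta> \<epsilon>)) x\<bar> \<le> C / \<epsilon>) (at_right 0)"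
    by blast
  have e1: "eventually (\<lambda>e::real. e < 1) (at_right 0)"
    using order_tendstoD(2)[OF tendsto_ident_at[of "0::real" "{0<..}"], of 1] by simp
  have "eventually (enveloped \<eta> (5 * (1 + C)) C) (at_right 0)"
    using profile G e1 eventually_at_right_less[of "0::real"]
  proof eventually_elim
    case (elim e)
    then have pr: "smooth_real (\<eta> e)" "\<And>x. \<eta> e x > 0"
      "\<And>x. e^2 * deriv (deriv (\<eta> e)) x + (1 - x^2 - (\<eta> e x)^2) * \<eta> e x = 0"
      unfolding eta_profile_def by auto
    have "\<eta> e x \<le> 5 * (1 + C) / (1 + x^2)" for x
    proof (cases "x^2 \<le> 4")
      case True then show ?thesis using envelope_near elim C by auto
    next
      case False then show ?thesis using envelope_far[OF _ _ C pr(2) pr(3)] elim by auto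
    qed
    then show ?case unfolding enveloped_def using elim pr smooth_real_continuous by auto
  qed
  then show ?thesis by blast
qed

text \<open>Uniform closeness lets eta_eps be evaluated along any convergent path of points.\<close>
lemma enveloped_tendsto_eta0:
  assumes H: "eventually (enveloped \<eta> K C) (at_right 0)"
    and g: "(g \<longlongrightarrow> t) (at_right 0)"
  shows "((\<lambda>e. \<eta> e (g e)) \<longlongrightarrow> eta0 t) (at_right 0)"
proof -
  have "((\<lambda>e. e powr (1/3)) \<longlongrightarrow> 0) (at_right (0::real))"
  proof (rule tendsto_zero_powrI)
    show "\<forall>\<^sub>F e in at_right 0. 0 \<le> (e::real)"
      using eventually_at_right_less[of "0::real"] by (rule eventually_mono) simp
  qed (auto intro: tendsto_ident_at)
  then have "((\<lambda>e. C * e powr (1/3)) \<longlongrightarrow> 0) (at_right 0)"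
    by (rule tendsto_mult_right_zero)
  then have "((\<lambda>e. \<eta> e (g e) - eta0 (g e)) \<longlongrightarrow> 0) (at_right 0)"
    by (rule Lim_null_comparison[rotated]) (use H in \<open>eventually_elim, auto simp: enveloped_def\<close>)
  moreover have "((\<lambda>e. eta0 (g e)) \<longlongrightarrow> eta0 t) (at_right 0)"
    using continuous_on_eta0 g
    by (metis continuous_on_eq_continuous_at isCont_tendsto_compose open_UNIV UNIV_I)
  ultimately have "((\<lambda>e. (\<eta> e (g e) - eta0 (g e)) + eta0 (g e)) \<longlongrightarrow> 0 + eta0 t) (at_right 0)"
    by (rule tendsto_add)
  then show ?thesis by simp
qed

lemma enveloped_bounds:
  assumes "enveloped \<eta> K C e"
  shows "0 \<le> \<eta> e x" "\<eta> e x \<le> K" "(\<eta> e x)^2 \<le> K^2 * (1 / (1 + x^2))"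
proof -
  have p: "1 \<le> 1 + x^2" by simp
  have v: "0 < \<eta> e x" "\<eta> e x \<le> K / (1 + x^2)" using assms by (auto simp: enveloped_def)
  then have "0 < K / (1 + x^2)" by linarith
  then have K: "K > 0" using p by (simp add: zero_less_divide_iff)
  have "K / (1 + x^2) \<le> K" using divide_left_mono[of 1 "1 + x^2" K] K by (simp add: add_pos_nonneg)
  with v show "0 \<le> \<eta> e x" "\<eta> e x \<le> K" by auto
  have "(\<eta> e x)^2 \<le> \<eta> e x * (K / (1 + x^2))"
    using mult_left_mono[OF v(2), of "\<eta> e x"] v by (simp add: power2_eq_square)
  also have "\<dots> \<le> K * (K / (1 + x^2))" using v \<open>\<eta> e x \<le> K\<close> K p by (intro mult_right_mono) auto
  finally show "(\<eta> e x)^2 \<le> K^2 * (1 / (1 + x^2))" by (simp add: power2_eq_square)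
qed


section \<open>Moments of eta_eps against soliton profiles\<close>

definition moment :: "(real \<Rightarrow> real \<Rightarrow> real) \<Rightarrow> nat \<Rightarrow> (real \<Rightarrow> real) \<Rightarrow> real \<Rightarrow> real \<Rightarrow> real \<Rightarrow> real" where
  "moment \<eta> p h a B e = (LBINT x. (\<eta> e x)^p * h (B * (x - a) / e))"

lemma tendsto_weighted_sq_integral:
  fixes g :: "real \<Rightarrow> real \<Rightarrow> real" and G :: "real \<Rightarrow> real"
  assumes H: "eventually (enveloped \<eta> K C) (at_right 0)"
    and g: "eventually (\<lambda>e. continuous_on UNIV (g e) \<and> (\<forall>x. \<bar>g e x\<bar> \<le> M)) (at_right 0)"
    and G: "G \<in> borel_measurable lborel"
    and lim: "AE x in lborel. ((\<lambda>e. g e x) \<longlongrightarrow> G x) (at_right 0)"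
  shows "((\<lambda>e. LBINT x. (\<eta> e x)^2 * g e x) \<longlongrightarrow> (LBINT x. (eta0 x)^2 * G x)) (at_right 0)"
proof (rule integral_dominated_convergence_at_right_0[where w="\<lambda>x. M * K^2 * (1 / (1 + x^2))"])
  have [measurable]: "eta0 \<in> borel_measurable lborel"
    using continuous_on_eta0 by (simp add: borel_measurable_continuous_onI)
  show "(\<lambda>x. (eta0 x)^2 * G x) \<in> borel_measurable lborel" using G by measurable
  show "integrable lborel (\<lambda>x. M * K^2 * (1 / (1 + x^2)))"
    using integrable_inverse_1_plus_sq by (rule integrable_mult_right)
  show "\<forall>\<^sub>F e in at_right 0. (\<lambda>x. (\<eta> e x)^2 * g e x) \<in> borel_measurable lborel \<and>
          (\<forall>x. \<bar>(\<eta> e x)^2 * g e x\<bar> \<le> M * K^2 * (1 / (1 + x^2)))"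
    using H g
  proof eventually_elim
    case (elim e)
    have "continuous_on UNIV (\<lambda>x. (\<eta> e x)^2 * g e x)"
      using elim by (intro continuous_intros) (auto simp: enveloped_def)
    moreover have "\<bar>(\<eta> e x)^2 * g e x\<bar> \<le> M * K^2 * (1 / (1 + x^2))" for x
    proof -
      have "\<bar>(\<eta> e x)^2 * g e x\<bar> = (\<eta> e x)^2 * \<bar>g e x\<bar>" by (simp add: abs_mult)
      also have "\<dots> \<le> (K^2 * (1 / (1 + x^2))) * M"
        using elim enveloped_bounds(3)[OF elim(1)]
        by (intro mult_mono) (auto simp: add_pos_nonneg less_imp_le)
      finally show ?thesis by (simp add: mult_ac)
    qed
    ultimately show ?case by (simp add: borel_measurable_continuous_onI)
  qed
  show "AE x in lborel. ((\<lambda>e. (\<eta> e x)^2 * g e x) \<longlongrightarrow> (eta0 x)^2 * G x) (at_right 0)"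
    using lim
  proof eventually_elim
    case (elim x)
    have "((\<lambda>e. \<eta> e x) \<longlongrightarrow> eta0 x) (at_right 0)"
      using enveloped_tendsto_eta0[OF H, of "\<lambda>_. x" x] by simp
    from tendsto_power[OF this, of 2] elim show ?case by (rule tendsto_mult)
  qed
qed

text \<open>The tanh-moment tends to \<integral> eta_0^2 sgn(x - a), since tanh(B (x - a)/eps) \<rightarrow> sgn(x - a) off x = a.\<close>
lemma moment_tanh_tendsto:
  assumes H: "eventually (enveloped \<eta> K C) (at_right 0)" and B: "B > 0" and a: "-1 < a" "a < 1"
  shows "(moment \<eta> 2 tanh a B \<longlongrightarrow> -2 * (a - a^3/3)) (at_right 0)"
proof -
  have "((\<lambda>e. LBINT x. (\<eta> e x)^2 * tanh (B * (x - a) / e)) \<longlongrightarrow>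
          (LBINT x. (eta0 x)^2 * sgn (x - a))) (at_right 0)"
  proof (rule tendsto_weighted_sq_integral[OF H, where M=1])
    show "\<forall>\<^sub>F e in at_right 0. continuous_on UNIV (\<lambda>x. tanh (B * (x - a) / e)) \<and>
            (\<forall>x. \<bar>tanh (B * (x - a) / e)\<bar> \<le> 1)"
      using eventually_at_right_less[of "0::real"]
    proof eventually_elim
      case (elim e)
      have "continuous_on UNIV (\<lambda>x. tanh (B * (x - a) / e))"
        using elim by (intro continuous_intros) auto
      moreover have "\<bar>tanh y\<bar> \<le> 1" for y :: real
        using tanh_real_lt_1[of y] tanh_real_gt_neg1[of y] by linarith
      ultimately show ?case by blast
    qed
    show "AE x in lborel. ((\<lambda>e. tanh (B * (x - a) / e)) \<longlongrightarrow> sgn (x - a)) (at_right 0)"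
      using AE_lborel_singleton[of a]
    proof eventually_elim
      case (elim x)
      then have "((\<lambda>e. tanh (B * (x - a) / e)) \<longlongrightarrow> sgn (B * (x - a))) (at_right 0)"
        using B by (intro tanh_div_tendsto_sgn) simp
      then show ?case using B by (simp add: sgn_mult)
    qed
  qed simp
  then show ?thesis using eta0_sq_sgn_integral[OF a] by (simp add: moment_def[abs_def])
qed

text \<open>The moment against z sech^2 z vanishes in the limit, since that weight tends to 0 off x = a.\<close>
lemma moment_z_sech_sq_tendsto:
  assumes H: "eventually (enveloped \<eta> K C) (at_right 0)" and B: "B > 0"
  shows "(moment \<eta> 2 (\<lambda>z. z * (sech z)^2) a B \<longlongrightarrow> 0) (at_right 0)"
proof -
  have "((\<lambda>e. LBINT x. (\<eta> e x)^2 * (B * (x - a) / e * (sech (B * (x - a) / e))^2)) \<longlongrightarrow>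
          (LBINT x. (eta0 x)^2 * 0)) (at_right 0)"
  proof (rule tendsto_weighted_sq_integral[OF H, where M=2])
    show "\<forall>\<^sub>F e in at_right 0. continuous_on UNIV (\<lambda>x. B * (x - a) / e * (sech (B * (x - a) / e))^2) \<and>
            (\<forall>x. \<bar>B * (x - a) / e * (sech (B * (x - a) / e))^2\<bar> \<le> 2)"
      using eventually_at_right_less[of "0::real"]
    proof eventually_elim
      case (elim e)
      have "continuous_on UNIV (\<lambda>x. B * (x - a) / e * (sech (B * (x - a) / e))^2)"
        using elim by (intro continuous_intros) auto
      then show ?case using abs_z_sech_sq_le(1) by blast
    qed
    show "AE x in lborel. ((\<lambda>e. B * (x - a) / e * (sech (B * (x - a) / e))^2) \<longlongrightarrow> 0) (at_right 0)"
      using AE_lborel_singleton[of a]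
    proof eventually_elim
      case (elim x)
      then show ?case using B z_sech_sq_div_tendsto_0[of "B * (x - a)"] by simp
    qed
  qed simp
  then show ?thesis by (simp add: moment_def[abs_def])
qed

text \<open>Integrable regime: the substitution x = a + eps y / B turns moment/eps into
  (1/B) \<integral> eta_eps(a + eps y/B)^p h(y) dy, whose integrand converges to eta_0(a)^p h(y).\<close>
lemma moment_rescaled:
  assumes e: "e > 0" and B: "B > 0"
  shows "moment \<eta> p h a B e / e = (1/B) * (LBINT y. (\<eta> e (a + (e/B)*y))^p * h y)"
proof -
  have "moment \<eta> p h a B e =
        \<bar>e/B\<bar> *\<^sub>R (LBINT y. (\<eta> e (a + (e/B)*y))^p * h (B * ((a + (e/B)*y) - a) / e))"
    unfolding moment_def by (rule lborel_integral_real_affine) (use e B in auto)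
  also have "(\<lambda>y. h (B * ((a + (e/B)*y) - a) / e)) = h"
    using e B by (simp add: field_simps)
  finally show ?thesis using e B by simp
qed

lemma moment_concentration:
  fixes h :: "real \<Rightarrow> real"
  assumes H: "eventually (enveloped \<eta> K C) (at_right 0)" and B: "B > 0"
    and hc: "continuous_on UNIV h" and hi: "integrable lborel h"
  shows "((\<lambda>e. moment \<eta> p h a B e / e) \<longlongrightarrow> (eta0 a)^p * integral\<^sup>L lborel h / B) (at_right 0)"
proof -
  have "((\<lambda>e. LBINT y. (\<eta> e (a + (e/B)*y))^p * h y) \<longlongrightarrow> (LBINT y. (eta0 a)^p * h y)) (at_right 0)"
  proof (rule integral_dominated_convergence_at_right_0[where w="\<lambda>y. K^p * \<bar>h y\<bar>"])
    have "continuous_on UNIV (\<lambda>y. (eta0 a)^p * h y)" using hc by (intro continuous_intros)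
    then show "(\<lambda>y. (eta0 a)^p * h y) \<in> borel_measurable lborel"
      by (simp add: borel_measurable_continuous_onI)
    show "integrable lborel (\<lambda>y. K^p * \<bar>h y\<bar>)"
      using integrable_abs[OF hi] by (rule integrable_mult_right)
    show "\<forall>\<^sub>F e in at_right 0. (\<lambda>y. (\<eta> e (a + (e/B)*y))^p * h y) \<in> borel_measurable lborel \<and>
            (\<forall>y. \<bar>(\<eta> e (a + (e/B)*y))^p * h y\<bar> \<le> K^p * \<bar>h y\<bar>)"
      using H
    proof eventually_elim
      case (elim e)
      then have c: "continuous_on UNIV (\<eta> e)" by (simp add: enveloped_def)
      have "continuous_on UNIV (\<lambda>y. (\<eta> e (a + (e/B)*y))^p * h y)"
        by (intro continuous_intros continuous_on_compose2[OF c] hc) auto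
      moreover have "\<bar>(\<eta> e (a + (e/B)*y))^p * h y\<bar> \<le> K^p * \<bar>h y\<bar>" for y
        using enveloped_bounds(1,2)[OF elim]
        by (simp add: abs_mult mult_right_mono power_mono)
      ultimately show ?case by (simp add: borel_measurable_continuous_onI)
    qed
    show "AE y in lborel. ((\<lambda>e. (\<eta> e (a + (e/B)*y))^p * h y) \<longlongrightarrow> (eta0 a)^p * h y) (at_right 0)"
    proof (rule AE_I2)
      fix y
      have "((\<lambda>e. a + (e/B)*y) \<longlongrightarrow> a + (0/B)*y) (at_right 0)"
        using B by (intro tendsto_intros tendsto_ident_at) auto
      from enveloped_tendsto_eta0[OF H this]
      show "((\<lambda>e. (\<eta> e (a + (e/B)*y))^p * h y) \<longlongrightarrow> (eta0 a)^p * h y) (at_right 0)"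
        by (auto intro!: tendsto_intros)
    qed
  qed
  then have "((\<lambda>e. (1/B) * (LBINT y. (\<eta> e (a + (e/B)*y))^p * h y)) \<longlongrightarrow>
               (1/B) * (LBINT y. (eta0 a)^p * h y)) (at_right 0)"
    by (intro tendsto_intros)
  moreover have "eventually (\<lambda>e. (1/B) * (LBINT y. (\<eta> e (a + (e/B)*y))^p * h y) =
                                 moment \<eta> p h a B e / e) (at_right 0)"
    using eventually_at_right_less[of "0::real"] by eventually_elim (simp add: moment_rescaled B)
  ultimately have "((\<lambda>e. moment \<eta> p h a B e / e) \<longlongrightarrow> (1/B) * (LBINT y. (eta0 a)^p * h y)) (at_right 0)"
    by (rule Lim_transform_eventually)
  then show ?thesis by simp
qed


text \<open>L_eps/(2 eps) in terms of the five moments, each scaled to its natural order in eps.\<close>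
lemma Lagr_via_moments:
  assumes B: "B > 0"
  shows "eventually (\<lambda>e. Lagr \<eta> e a b B ad bd Bd / (2 * e) =
      bd / (2 * sqrt (1 - b^2)) * moment \<eta> 2 tanh a B e
    + b * sqrt (1 - b^2) * B * ad / 2 * (moment \<eta> 2 (\<lambda>z. (sech z)^2) a B e / e)
    - b * sqrt (1 - b^2) * Bd / (2 * B) * moment \<eta> 2 (\<lambda>z. z * (sech z)^2) a B e
    + (1 - b^2) * B^2 / 2 * (moment \<eta> 2 (\<lambda>z. (sech z)^4) a B e / e)
    + (1 - b^2)^2 / 4 * (moment \<eta> 4 (\<lambda>z. (sech z)^4) a B e / e)) (at_right 0)"
  using eventually_at_right_less[of "0::real"]
proof eventually_elim
  case (elim e)
  then show ?case unfolding Lagr_def Let_def moment_def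
    using B by (simp add: field_simps mult.assoc)
qed

theorem lemma1:
  fixes \<eta> :: "real \<Rightarrow> real \<Rightarrow> real"
    and a b B ad bd Bd :: real
  assumes profile: "eventually (\<lambda>\<epsilon>. eta_profile \<epsilon> (\<eta> \<epsilon>)) (at_right 0)"
    and pointwise: "\<And>x. ((\<lambda>\<epsilon>. \<eta> \<epsilon> x) \<longlongrightarrow> eta0 x) (at_right 0)"
    and C1_local: "\<And>K. compact K \<Longrightarrow> K \<subseteq> {-1<..<1} \<Longrightarrow>
        \<exists>C>0. eventually (\<lambda>\<epsilon>. \<forall>x\<in>K.
            \<bar>\<eta> \<epsilon> x - eta0 x\<bar> \<le> C * \<epsilon>^2 \<and>
            \<bar>deriv (\<eta> \<epsilon>) x - deriv eta0 x\<bar> \<le> C * \<epsilon>^2) (at_right 0)"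
    and global: "\<exists>C>0. eventually (\<lambda>\<epsilon>. \<forall>x.
            \<bar>\<eta> \<epsilon> x - eta0 x\<bar> \<le> C * \<epsilon> powr (1/3) \<and>
            \<bar>deriv (\<eta> \<epsilon>) x\<bar> \<le> C * \<epsilon> powr (-1/3) \<and>
            \<bar>deriv (deriv (\<eta> \<epsilon>)) x\<bar> \<le> C / \<epsilon>) (at_right 0)"
    and B: "B > 0" and a: "a \<in> {-1<..<1}" and b: "b \<in> {-1<..<1}"
  shows "((\<lambda>\<epsilon>. Lagr \<eta> \<epsilon> a b B ad bd Bd / (2 * \<epsilon>)) \<longlongrightarrow>
           - bd / sqrt (1 - b^2) * (a - a^3 / 3)
           + b * sqrt (1 - b^2) * (1 - a^2) * ad
           + 2/3 * (1 - a^2) * (1 - b^2) * B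
           + 1 / (3 * B) * (1 - a^2)^2 * (1 - b^2)^2) (at_right 0)"
proof -
  from eventually_enveloped[OF profile global]
  obtain K C where H: "eventually (enveloped \<eta> K C) (at_right 0)" by blast
  have a1: "-1 < a" "a < 1" and b2: "b^2 < 1" using a b by (auto simp: abs_square_less_1)
  have eta0_a: "(eta0 a)^2 = 1 - a^2" using a1 by (simp add: eta0_sq abs_square_le_1)
  then have eta0_a4: "(eta0 a)^4 = (1 - a^2)^2" by (metis power_mult num_double numeral_mult)
  have hc: "continuous_on UNIV (\<lambda>z::real. (sech z)^n)" for n by (intro continuous_intros)
  note sech2 = moment_concentration[OF H B hc sech_sq_integral(1)]
   and sech4 = moment_concentration[OF H B hc sech_pow4_integral(1)]
  have "((\<lambda>e. Lagr \<eta> e a b B ad bd Bd / (2 * e)) \<longlongrightarrow>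
      bd / (2 * sqrt (1 - b^2)) * (-2 * (a - a^3/3)) + b * sqrt (1 - b^2) * B * ad / 2 * ((1 - a^2) * 2 / B)
    - b * sqrt (1 - b^2) * Bd / (2 * B) * 0 + (1 - b^2) * B^2 / 2 * ((1 - a^2) * (4/3) / B)
    + (1 - b^2)^2 / 4 * ((1 - a^2)^2 * (4/3) / B)) (at_right 0)"
    unfolding tendsto_cong[OF Lagr_via_moments[OF B]]
    using sech2[of 2 a] sech4[of 2 a] sech4[of 4 a]
    unfolding eta0_a eta0_a4 sech_sq_integral(2) sech_pow4_integral(2)
    by (intro tendsto_add tendsto_diff tendsto_mult tendsto_const
          moment_tanh_tendsto[OF H B a1] moment_z_sech_sq_tendsto[OF H B])
  moreover define S where "S = sqrt (1 - b^2)"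
  moreover have "S \<noteq> 0" "1 - b^2 = S^2" using b2 by (simp_all add: S_def)
  ultimately show ?thesis unfolding S_def[symmetric] \<open>1 - b^2 = S^2\<close>
    by (elim tendsto_eq_rhs) (use B in \<open>simp add: field_simps power2_eq_square\<close>)
qed

end
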